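(* Fix integers $2\le k\le n$, let $M=\lceil n/k\rceil$ and $r=n-(M-1)k$, and consider the $k$-grouped $(k,n)$ random-grid sharing of a secret bit described in the context. Let $\vec\lambda=(\lambda_1,\ldots,\lambda_M)$ be a valid partition and suppose $\lambda_j$ shadow images are selected from the $j$-th group for each $j$. Let $x$ be an integer with $\lambda_M\le x\le k$ and let $B\in\{0,1\}^{1\times x}$ be any row vector of Hamming weight $\lambda_M$. Then $$\Pr(\#C(\vec\lambda)=x)=\frac{\binom{k-\lambda_M}{x-\lambda_M}\,\bigl|\mathcal{E}^{\vec\lambda}_x(B)\bigr|}{\prod_{j=1}^{M-1}\binom{k}{\lambda_j}}.$$
   Context: Sharing of a secret bit $s$: $b_1,\ldots,b_{k-1}$ are independent uniform bits and $b_k=s\oplus b_1\oplus\cdots\oplus b_{k-1}$. The $n$ shares form $M$ groups; groups $1,\ldots,M-1$ have $k$ positions and group $M$ has $r$ positions. Group 1 is $(b_1,\ldots,b_k)$ (position $\delta$ carries index $\delta$). For each $j\ge2$ an independent uniformly random permutation $\sigma_j$ of $\{1,\ldots,k\}$ is drawn and position $\delta$ of group $j$ carries index $\sigma_j(\delta)$ and bit $b_{\sigma_j(\delta)}$ ($\delta\le r$ for group $M$); it is the pixel of shadow image $(j-1)k+\delta$. A valid partition is $\vec\lambda=(\lambda_1,\ldots,\lambda_M)$ of non-negative integers with $\max_j\lambda_j\le k$ and $\lambda_M\le r$. Selecting $\lambda_j$ (fixed) positions of group $j$, $C(\vec\lambda)$ is the multiset of carried indices and $\#C(\vec\lambda)$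 the number of its distinct elements; probabilities are over the random permutations. $\mathcal{E}^{\vec\lambda}_x(B)$ is the set of $M\times x$ matrices $E$ with entries in $\{0,1\}$ whose last row equals $B$, whose $i$-th row sum is $\lambda_i$ for every $i=1,\ldots,M$, and each of whose column sums is at least $1$. *)

theory Defs
  imports "HOL-Probability.Probability" "HOL-Combinatorics.Permutations"
begin

text \<open>Random data of the scheme: for each group j in {2..M} an independent uniformly
  random permutation sigma j of {1..k}; outside {2..M} the component is fixed to id
  (so that the sample space is a finite set and the uniform distribution on it is the
  product of independent uniform permutations).\<close>
definition perm_tuples :: "nat \<Rightarrow> nat \<Rightarrow> (nat \<Rightarrow> nat \<Rightarrow> nat) set" where
  "perm_tuples k M = {\<sigma>. (\<forall>j\<in>{2..M}. \<sigma> j permutes {1..k}) \<and> (\<forall>j. j \<notin> {2..M} \<longrightarrow> \<sigma> j = id)}"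

definition carried :: "(nat \<Rightarrow> nat \<Rightarrow> nat) \<Rightarrow> nat \<Rightarrow> nat \<Rightarrow> nat" where
  "carried \<sigma> j \<delta> = (if j = 1 then \<delta> else \<sigma> j \<delta>)"

definition numC :: "(nat \<Rightarrow> nat \<Rightarrow> nat) \<Rightarrow> nat \<Rightarrow> (nat \<Rightarrow> nat set) \<Rightarrow> nat" where
  "numC \<sigma> M S = card (\<Union>j\<in>{1..M}. carried \<sigma> j ` S j)"

definition prob_numC :: "nat \<Rightarrow> nat \<Rightarrow> (nat \<Rightarrow> nat set) \<Rightarrow> nat \<Rightarrow> real" where
  "prob_numC k M S x =
     measure_pmf.prob (pmf_of_set (perm_tuples k M)) {\<sigma>. numC \<sigma> M S = x}"

definition Emats :: "nat \<Rightarrow> nat \<Rightarrow> (nat \<Rightarrow> nat) \<Rightarrow> (nat \<Rightarrow> nat) \<Rightarrow> (nat \<Rightarrow> nat \<Rightarrow> nat) set" where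
  "Emats M x lam B = {E.
      (\<forall>i j. E i j \<in> {0, 1}) \<and>
      (\<forall>i j. (i \<notin> {1..M} \<or> j \<notin> {1..x}) \<longrightarrow> E i j = 0) \<and>
      (\<forall>j\<in>{1..x}. E M j = B j) \<and>
      (\<forall>i\<in>{1..M}. (\<Sum>j=1..x. E i j) = lam i) \<and>
      (\<forall>j\<in>{1..x}. (\<Sum>i=1..M. E i j) \<ge> 1)}"

end

theory Submission
  imports Defs
begin

(* The permuted images \<sigma>_j(S_j), j = 2..M, are independent uniformly random \<lambda>_j-subsets of {1..k},
   so Pr(#C = x) is the number of families (T_2, ..., T_M) of such subsets with
   |S_1 \<union> T_2 \<union> ... \<union> T_M| = x, divided by \<Prod>_{j\<ge>2} C(k, \<lambda>_j).  Grouping these families by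
   their union, their number is C(k - \<lambda>_1, x - \<lambda>_1) times the number of coverings of an x-set by
   sets of sizes \<lambda>_2, ..., \<lambda>_M together with a fixed \<lambda>_1-subset.  The number of coverings of an
   x-set by sets of sizes \<lambda>_1, ..., \<lambda>_M is C(x, \<lambda>_1) times the latter, and also C(x, \<lambda>_M) times
   the number of coverings whose last set is the support of B, which are the matrices of
   E^\<lambda>_x(B) read row by row.  The identity C(k, x) C(x, l) = C(k, l) C(k - l, x - l) compares
   the two counts. *)

lemma ex_bij_betw_image_eq:
  assumes "finite V" "finite V'" "F \<subseteq> V" "F' \<subseteq> V'" "card V = card V'" "card F = card F'"
  shows "\<exists>h. bij_betw h V V' \<and> h ` F = F'"
proof -
  have fin: "finite F" "finite F'" using assms finite_subset by auto
  obtain f where f: "bij_betw f F F'" using finite_same_card_bij[OF fin assms(6)] by blast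
  have "card (V - F) = card (V' - F')" using assms fin by (simp add: card_Diff_subset)
  then obtain g where g: "bij_betw g (V - F) (V' - F')"
    using finite_same_card_bij assms by (meson finite_Diff)
  define h where "h x = (if x \<in> F then f x else g x)" for x
  have hF: "bij_betw h F F'" using f by (rule bij_betw_cong[THEN iffD1, rotated]) (simp add: h_def)
  have "bij_betw h (V - F) (V' - F')" using g by (rule bij_betw_cong[THEN iffD1, rotated]) (simp add: h_def)
  with hF have "bij_betw h (F \<union> (V - F)) (F' \<union> (V' - F'))" by (rule bij_betw_combine) auto
  moreover have "F \<union> (V - F) = V" "F' \<union> (V' - F') = V'" using assms by auto
  ultimately show ?thesis using hF by (metis bij_betw_imp_surj_on)
qed

lemma ex_permutes_image_eq:
  assumes "finite U" "T \<subseteq> U" "T' \<subseteq> U" "card T = card T'"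
  shows "\<exists>g. g permutes U \<and> g ` T = T'"
proof -
  obtain h where h: "bij_betw h U U" "h ` T = T'" using ex_bij_betw_image_eq[of U U T T'] assms by auto
  define g where "g x = (if x \<in> U then h x else x)" for x
  have "bij_betw g U U" using h(1) by (rule bij_betw_cong[THEN iffD1, rotated]) (simp add: g_def)
  then have "g permutes U" by (rule bij_imp_permutes) (simp add: g_def)
  moreover have "g ` T = T'" using h(2) assms(2) by (auto simp: g_def image_def)
  ultimately show ?thesis by blast
qed

section \<open>Families of sets of prescribed sizes and coverings\<close>

definition families :: "'a set \<Rightarrow> nat set \<Rightarrow> (nat \<Rightarrow> nat) \<Rightarrow> (nat \<Rightarrow> 'a set) set" where
  "families U I lam = PiE_dflt I {} (\<lambda>i. {T. T \<subseteq> U \<and> card T = lam i})"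

lemma mem_families_iff:
  "R \<in> families U I lam \<longleftrightarrow> (\<forall>i\<in>I. R i \<subseteq> U \<and> card (R i) = lam i) \<and> (\<forall>i. i \<notin> I \<longrightarrow> R i = {})"
  by (auto simp: families_def PiE_dflt_def)

lemma families_cong: "(\<And>i. i \<in> I \<Longrightarrow> lam i = lam' i) \<Longrightarrow> families U I lam = families U I lam'"
  by (simp add: families_def PiE_dflt_def)

lemma finite_families: "finite U \<Longrightarrow> finite I \<Longrightarrow> finite (families U I lam)"
  unfolding families_def by (rule finite_PiE_dflt) auto

lemma card_families:
  "finite U \<Longrightarrow> finite I \<Longrightarrow> card (families U I lam) = (\<Prod>i\<in>I. card U choose lam i)"
  unfolding families_def by (subst card_PiE_dflt) (auto simp: n_subsets)

definition covers :: "'a set \<Rightarrow> 'a set \<Rightarrow> nat set \<Rightarrow> (nat \<Rightarrow> nat) \<Rightarrow> (nat \<Rightarrow> 'a set) set" where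
  "covers V F I lam = {R \<in> families V I lam. F \<union> \<Union>(R ` I) = V}"

lemma finite_covers: "finite V \<Longrightarrow> finite I \<Longrightarrow> finite (covers V F I lam)"
  unfolding covers_def by (simp add: finite_families)

lemma card_covers_le:
  assumes h: "bij_betw h V V'" "h ` F = F'" and "finite V'" "finite I"
  shows "card (covers V F I lam) \<le> card (covers V' F' I lam)"
proof (rule card_inj_on_le)
  show "finite (covers V' F' I lam)" using assms by (simp add: finite_covers)
  have inj: "inj_on h V" using h(1) by (rule bij_betw_imp_inj_on)
  show "(\<lambda>R i. h ` R i) ` covers V F I lam \<subseteq> covers V' F' I lam"
  proof clarify
    fix R assume "R \<in> covers V F I lam"
    then have R: "\<forall>i\<in>I. R i \<subseteq> V \<and> card (R i) = lam i" "\<forall>i. i \<notin> I \<longrightarrow> R i = {}"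
      "F \<union> \<Union>(R ` I) = V" by (auto simp: covers_def mem_families_iff)
    have "h ` (F \<union> \<Union>(R ` I)) = V'" using R(3) h(1) by (simp add: bij_betw_def)
    then have "F' \<union> \<Union>((\<lambda>i. h ` R i) ` I) = V'" using h(2) by (simp add: image_Un image_UN)
    moreover have "h ` R i \<subseteq> V' \<and> card (h ` R i) = lam i" if "i \<in> I" for i
    proof -
      have Ri: "R i \<subseteq> V" "card (R i) = lam i" using R(1) that by auto
      then have "h ` R i \<subseteq> h ` V" by blast
      then show ?thesis using bij_betw_imp_surj_on[OF h(1)] card_image[OF inj_on_subset[OF inj Ri(1)]] Ri(2)
        by simp
    qed
    ultimately show "(\<lambda>i. h ` R i) \<in> covers V' F' I lam"
      using R(2) by (simp add: covers_def mem_families_iff)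
  qed
  show "inj_on (\<lambda>R i. h ` R i) (covers V F I lam)"
  proof (rule inj_onI)
    fix R1 R2 assume "R1 \<in> covers V F I lam" "R2 \<in> covers V F I lam"
      and images: "(\<lambda>i. h ` R1 i) = (\<lambda>i. h ` R2 i)"
    then have "R1 i \<subseteq> V" "R2 i \<subseteq> V" for i by (auto simp: covers_def mem_families_iff)
    then show "R1 = R2" using images inj_on_image_eq_iff[OF inj] by (metis ext)
  qed
qed

lemma card_covers_eq:
  assumes "finite V" "finite V'" "F \<subseteq> V" "F' \<subseteq> V'" "card V = card V'" "card F = card F'" "finite I"
  shows "card (covers V F I lam) = card (covers V' F' I lam)"
proof -
  obtain h where h: "bij_betw h V V'" "h ` F = F'" using ex_bij_betw_image_eq assms by metis
  have "bij_betw (inv_into V h) V' V" using h(1) by (rule bij_betw_inv_into)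
  moreover have "inv_into V h ` F' = F" using h assms(3) bij_betw_def inv_into_image_cancel by metis
  ultimately show ?thesis using card_covers_le h assms by (metis antisym)
qed

lemma covers_insert:
  assumes "i0 \<notin> J"
  shows "covers V F (insert i0 J) lam =
           (\<Union>R0\<in>{R0. R0 \<subseteq> V \<and> card R0 = lam i0}. (\<lambda>R. R(i0 := R0)) ` covers V (F \<union> R0) J lam)"
proof
  show "covers V F (insert i0 J) lam \<subseteq>
      (\<Union>R0\<in>{R0. R0 \<subseteq> V \<and> card R0 = lam i0}. (\<lambda>R. R(i0 := R0)) ` covers V (F \<union> R0) J lam)"
  proof
    fix R assume R: "R \<in> covers V F (insert i0 J) lam"
    have "R(i0 := {}) \<in> covers V (F \<union> R i0) J lam"
      using R assms by (auto simp: covers_def mem_families_iff)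
    moreover have "R = (R(i0 := {}))(i0 := R i0)" by simp
    moreover have "R i0 \<subseteq> V \<and> card (R i0) = lam i0"
      using R by (simp add: covers_def mem_families_iff)
    ultimately show "R \<in> (\<Union>R0\<in>{R0. R0 \<subseteq> V \<and> card R0 = lam i0}. (\<lambda>R. R(i0 := R0)) ` covers V (F \<union> R0) J lam)"
      by blast
  qed
  show "(\<Union>R0\<in>{R0. R0 \<subseteq> V \<and> card R0 = lam i0}. (\<lambda>R. R(i0 := R0)) ` covers V (F \<union> R0) J lam) \<subseteq>
      covers V F (insert i0 J) lam"
    using assms by (auto simp: covers_def mem_families_iff split: if_split_asm)
qed

lemma card_covers_insert:
  assumes "finite V" "finite J" "i0 \<notin> J" "V0 \<subseteq> V" "card V0 = lam i0"
  shows "card (covers V {} (insert i0 J) lam) = (card V choose lam i0) * card (covers V V0 J lam)"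
proof -
  let ?Rs = "{R0. R0 \<subseteq> V \<and> card R0 = lam i0}"
  have "card (covers V {} (insert i0 J) lam) = (\<Sum>R0\<in>?Rs. card ((\<lambda>R. R(i0 := R0)) ` covers V R0 J lam))"
    unfolding covers_insert[OF assms(3)] Un_empty_left
  proof (rule card_UN_disjoint)
    show "finite ?Rs" using assms(1) by simp
    show "\<forall>R0\<in>?Rs. finite ((\<lambda>R. R(i0 := R0)) ` covers V R0 J lam)"
      using assms(1,2) by (simp add: finite_covers)
    show "\<forall>R0\<in>?Rs. \<forall>R1\<in>?Rs. R0 \<noteq> R1 \<longrightarrow>
        (\<lambda>R. R(i0 := R0)) ` covers V R0 J lam \<inter> (\<lambda>R. R(i0 := R1)) ` covers V R1 J lam = {}"
      by (auto dest: fun_cong[where x = i0])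
  qed
  also have "\<dots> = (\<Sum>R0\<in>?Rs. card (covers V V0 J lam))"
  proof (rule sum.cong[OF refl])
    fix R0 assume R0: "R0 \<in> ?Rs"
    have "inj_on (\<lambda>R. R(i0 := R0)) (covers V R0 J lam)"
    proof (rule inj_onI)
      fix R1 R2 assume "R1 \<in> covers V R0 J lam" "R2 \<in> covers V R0 J lam"
        and "R1(i0 := R0) = R2(i0 := R0)"
      moreover have "R1 i0 = {}" "R2 i0 = {}" using calculation assms(3) by (auto simp: covers_def mem_families_iff)
      ultimately show "R1 = R2" by (metis fun_upd_triv fun_upd_upd)
    qed
    then have "card ((\<lambda>R. R(i0 := R0)) ` covers V R0 J lam) = card (covers V R0 J lam)"
      by (rule card_image)
    also have "\<dots> = card (covers V V0 J lam)"
      using R0 assms by (intro card_covers_eq) auto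
    finally show "card ((\<lambda>R. R(i0 := R0)) ` covers V R0 J lam) = card (covers V V0 J lam)" .
  qed
  also have "\<dots> = (card V choose lam i0) * card (covers V V0 J lam)"
    using assms(1) by (simp add: n_subsets)
  finally show ?thesis .
qed

lemma card_supsets:
  assumes "finite U" "F \<subseteq> U" "card F \<le> x"
  shows "card {W. F \<subseteq> W \<and> W \<subseteq> U \<and> card W = x} = (card U - card F) choose (x - card F)"
proof -
  have fin: "finite F" using assms finite_subset by blast
  have "bij_betw (\<lambda>W. W - F) {W. F \<subseteq> W \<and> W \<subseteq> U \<and> card W = x} {D. D \<subseteq> U - F \<and> card D = x - card F}"
  proof (rule bij_betw_byWitness[where f' = "\<lambda>D. D \<union> F"])
    show "(\<lambda>W. W - F) ` {W. F \<subseteq> W \<and> W \<subseteq> U \<and> card W = x} \<subseteq> {D. D \<subseteq> U - F \<and> card D = x - card F}"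
      using assms fin by (auto simp: card_Diff_subset intro: finite_subset)
    show "(\<lambda>D. D \<union> F) ` {D. D \<subseteq> U - F \<and> card D = x - card F} \<subseteq> {W. F \<subseteq> W \<and> W \<subseteq> U \<and> card W = x}"
    proof clarify
      fix D assume D: "D \<subseteq> U - F" "card D = x - card F"
      have "finite D" using D assms finite_subset by blast
      then have "card (D \<union> F) = card D + card F" using D fin by (subst card_Un_disjoint) auto
      then show "F \<subseteq> D \<union> F \<and> D \<union> F \<subseteq> U \<and> card (D \<union> F) = x" using D assms by auto
    qed
  qed auto
  then have "card {W. F \<subseteq> W \<and> W \<subseteq> U \<and> card W = x} = card {D. D \<subseteq> U - F \<and> card D = x - card F}"
    by (rule bij_betw_same_card)
  also have "\<dots> = (card U - card F) choose (x - card F)"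
    using assms by (simp add: n_subsets card_Diff_subset fin)
  finally show ?thesis .
qed

lemma families_union_card_eq:
  assumes "F \<subseteq> U"
  shows "{T \<in> families U I lam. card (F \<union> \<Union>(T ` I)) = x} =
           (\<Union>W\<in>{W. F \<subseteq> W \<and> W \<subseteq> U \<and> card W = x}. covers W F I lam)"
proof
  show "{T \<in> families U I lam. card (F \<union> \<Union>(T ` I)) = x} \<subseteq>
      (\<Union>W\<in>{W. F \<subseteq> W \<and> W \<subseteq> U \<and> card W = x}. covers W F I lam)"
  proof
    fix T assume "T \<in> {T \<in> families U I lam. card (F \<union> \<Union>(T ` I)) = x}"
    then have T: "T \<in> families U I lam" "card (F \<union> \<Union>(T ` I)) = x" by auto
    then have "F \<union> \<Union>(T ` I) \<in> {W. F \<subseteq> W \<and> W \<subseteq> U \<and> card W = x}"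
      using assms by (auto simp: mem_families_iff)
    moreover have "T \<in> covers (F \<union> \<Union>(T ` I)) F I lam"
      using T by (auto simp: covers_def mem_families_iff)
    ultimately show "T \<in> (\<Union>W\<in>{W. F \<subseteq> W \<and> W \<subseteq> U \<and> card W = x}. covers W F I lam)" by blast
  qed
  show "(\<Union>W\<in>{W. F \<subseteq> W \<and> W \<subseteq> U \<and> card W = x}. covers W F I lam) \<subseteq>
      {T \<in> families U I lam. card (F \<union> \<Union>(T ` I)) = x}"
    by (auto simp: covers_def mem_families_iff)
qed

lemma card_families_union_card_eq_covers:
  assumes "finite U" "finite I" "F \<subseteq> U" "card F \<le> x"
    and "finite V" "card V = x" "V0 \<subseteq> V" "card V0 = card F"
  shows "card {T \<in> families U I lam. card (F \<union> \<Union>(T ` I)) = x} =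
           ((card U - card F) choose (x - card F)) * card (covers V V0 I lam)"
proof -
  let ?Ws = "{W. F \<subseteq> W \<and> W \<subseteq> U \<and> card W = x}"
  have "card {T \<in> families U I lam. card (F \<union> \<Union>(T ` I)) = x} = (\<Sum>W\<in>?Ws. card (covers W F I lam))"
    unfolding families_union_card_eq[OF assms(3)]
  proof (rule card_UN_disjoint)
    show "finite ?Ws" using assms(1) by (auto intro: finite_subset[of _ "Pow U"])
    show "\<forall>W\<in>?Ws. finite (covers W F I lam)"
      using assms(1,2) by (auto intro: finite_covers finite_subset)
  qed (auto simp: covers_def)
  also have "\<dots> = (\<Sum>W\<in>?Ws. card (covers V V0 I lam))"
    using assms by (intro sum.cong refl card_covers_eq) (auto intro: finite_subset)
  also have "\<dots> = ((card U - card F) choose (x - card F)) * card (covers V V0 I lam)"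
    using card_supsets[OF assms(1,3,4)] by simp
  finally show ?thesis .
qed

lemma card_families_union_card_mult_choose:
  assumes "finite U" "finite I" "i0 \<notin> I" "F \<subseteq> U" "card F = lam i0"
    and "finite V" "card V = x" "x \<le> card U"
  shows "card {T \<in> families U I lam. card (F \<union> \<Union>(T ` I)) = x} * (card U choose lam i0) =
           (card U choose x) * card (covers V {} (insert i0 I) lam)"
proof (cases "lam i0 \<le> x")
  case True
  obtain V0 where V0: "V0 \<subseteq> V" "card V0 = lam i0"
    using obtain_subset_with_card_n True assms(7) by metis
  have "card {T \<in> families U I lam. card (F \<union> \<Union>(T ` I)) = x} * (card U choose lam i0) =
      ((card U choose lam i0) * ((card U - lam i0) choose (x - lam i0))) * card (covers V V0 I lam)"
    using card_families_union_card_eq_covers[of U I F x V V0 lam] assms V0 True by simp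
  also have "\<dots> = (card U choose x) * ((x choose lam i0) * card (covers V V0 I lam))"
    using choose_mult[OF True assms(8)] by simp
  also have "\<dots> = (card U choose x) * card (covers V {} (insert i0 I) lam)"
    using card_covers_insert[of V I i0 V0 lam] assms(2,3,6,7) V0 by simp
  finally show ?thesis .
next
  case False
  have "card (F \<union> \<Union>(T ` I)) > x" if "T \<in> families U I lam" for T
  proof -
    have "F \<union> \<Union>(T ` I) \<subseteq> U" using that assms(4) by (auto simp: mem_families_iff)
    then have "card F \<le> card (F \<union> \<Union>(T ` I))" using assms(1) by (meson card_mono finite_subset Un_upper1)
    then show ?thesis using False assms(5) by simp
  qed
  then have "{T \<in> families U I lam. card (F \<union> \<Union>(T ` I)) = x} = {}"
    by (metis (mono_tags, lifting) empty_Collect_eq less_irrefl)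
  moreover have "covers V {} (insert i0 I) lam = {}"
  proof (rule ccontr)
    assume "covers V {} (insert i0 I) lam \<noteq> {}"
    then obtain R where "R \<in> covers V {} (insert i0 I) lam" by blast
    then have "R i0 \<subseteq> V" "card (R i0) = lam i0" by (auto simp: covers_def mem_families_iff)
    then have "lam i0 \<le> card V" using card_mono[OF assms(6)] by metis
    then show False using assms(7) False by simp
  qed
  ultimately show ?thesis by (simp only: card.empty mult_0 mult_0_right)
qed

section \<open>Coverings as 0/1 matrices\<close>

lemma sum_zero_one_eq_card:
  assumes "finite A" "\<forall>j\<in>A. f j \<in> {0, 1::nat}"
  shows "sum f A = card {j\<in>A. f j = 1}"
proof -
  have "sum f A = sum (\<lambda>j. if f j = 1 then 1 else 0) A"
    by (rule sum.cong) (use assms in auto)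
  then show ?thesis using assms(1) by (simp add: sum.If_cases Int_def)
qed

text \<open>The last row of a matrix in \<^const>\<open>Emats\<close> is \<open>B\<close>, so only the rows \<open>1..M-1\<close> are recorded.\<close>

definition row_supports :: "nat \<Rightarrow> nat \<Rightarrow> (nat \<Rightarrow> nat \<Rightarrow> nat) \<Rightarrow> nat \<Rightarrow> nat set" where
  "row_supports M x E i = (if i \<in> {1..M-1} then {j\<in>{1..x}. E i j = 1} else {})"

definition cover_matrix :: "nat \<Rightarrow> nat \<Rightarrow> (nat \<Rightarrow> nat) \<Rightarrow> (nat \<Rightarrow> nat set) \<Rightarrow> nat \<Rightarrow> nat \<Rightarrow> nat" where
  "cover_matrix M x B R i j =
     (if j \<notin> {1..x} then 0
      else if i \<in> {1..M-1} then (if j \<in> R i then 1 else 0)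
      else if i = M then B j else 0)"

lemma cover_matrix_last_row:
  "1 \<le> M \<Longrightarrow> cover_matrix M x B R M j = (if j \<in> {1..x} then B j else 0)"
  by (cases M) (auto simp: cover_matrix_def)

lemma cover_matrix_row_support:
  assumes "i \<in> {1..M-1}" "R i \<subseteq> {1..x}"
  shows "{j\<in>{1..x}. cover_matrix M x B R i j = 1} = R i"
  using assms by (auto simp: cover_matrix_def)

lemma row_supports_mem_covers:
  assumes "1 \<le> M" "E \<in> Emats M x lam B"
  shows "row_supports M x E \<in> covers {1..x} {j\<in>{1..x}. B j = 1} {1..M-1} lam"
proof -
  have E01: "\<forall>i j. E i j \<in> {0, 1}" and last_row: "\<forall>j\<in>{1..x}. E M j = B j"
    and row_sums: "\<forall>i\<in>{1..M}. (\<Sum>j=1..x. E i j) = lam i"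
    and column_sums: "\<forall>j\<in>{1..x}. (\<Sum>i=1..M. E i j) \<ge> 1"
    using assms(2) by (auto simp: Emats_def)
  have "card (row_supports M x E i) = lam i" if "i \<in> {1..M-1}" for i
  proof -
    have "(\<Sum>j=1..x. E i j) = lam i" using that row_sums by auto
    then show ?thesis using that E01 sum_zero_one_eq_card[of "{1..x}" "E i"] by (simp add: row_supports_def)
  qed
  then have fam: "row_supports M x E \<in> families {1..x} {1..M-1} lam"
    by (auto simp: mem_families_iff row_supports_def)
  have covered: "j \<in> {j\<in>{1..x}. B j = 1} \<union> \<Union>(row_supports M x E ` {1..M-1})" if j: "j \<in> {1..x}" for j
  proof -
    have "\<exists>i\<in>{1..M}. E i j = 1"
    proof (rule ccontr)
      assume "\<not> (\<exists>i\<in>{1..M}. E i j = 1)"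
      then have "\<forall>i\<in>{1..M}. E i j = 0" using E01 by (metis insertE singletonD)
      then have "(\<Sum>i=1..M. E i j) = 0" by (rule sum.neutral)
      moreover have "(\<Sum>i=1..M. E i j) \<ge> 1" using column_sums j by blast
      ultimately show False by simp
    qed
    then obtain i where i: "i \<in> {1..M}" "E i j = 1" by blast
    then show ?thesis
      using j last_row by (cases "i = M") (auto simp: row_supports_def)
  qed
  have "{j\<in>{1..x}. B j = 1} \<union> \<Union>(row_supports M x E ` {1..M-1}) \<subseteq> {1..x}"
    by (auto simp: row_supports_def)
  with covered have "{j\<in>{1..x}. B j = 1} \<union> \<Union>(row_supports M x E ` {1..M-1}) = {1..x}"
    by blast
  with fam show ?thesis by (simp add: covers_def)
qed

lemma cover_matrix_mem_Emats:
  assumes "1 \<le> M" and B01: "\<forall>j\<in>{1..x}. B j \<in> {0, 1}" and B_sum: "(\<Sum>j=1..x. B j) = lam M"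
    and R: "R \<in> covers {1..x} {j\<in>{1..x}. B j = 1} {1..M-1} lam"
  shows "cover_matrix M x B R \<in> Emats M x lam B"
proof -
  let ?E = "cover_matrix M x B R"
  have R_fam: "\<forall>i\<in>{1..M-1}. R i \<subseteq> {1..x} \<and> card (R i) = lam i"
    and R_cov: "{j\<in>{1..x}. B j = 1} \<union> \<Union>(R ` {1..M-1}) = {1..x}"
    using R by (auto simp: covers_def mem_families_iff)
  have E01: "\<forall>i j. ?E i j \<in> {0, 1}" using B01 by (simp add: cover_matrix_def)
  have "(\<Sum>j=1..x. ?E i j) = lam i" if i: "i \<in> {1..M}" for i
  proof (cases "i = M")
    case True
    then show ?thesis using B_sum cover_matrix_last_row[OF assms(1)] by simp
  next
    case False
    then have i': "i \<in> {1..M-1}" using i by auto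
    have "(\<Sum>j=1..x. ?E i j) = card {j\<in>{1..x}. ?E i j = 1}"
      using E01 by (intro sum_zero_one_eq_card) auto
    then show ?thesis using R_fam i' cover_matrix_row_support[OF i'] by simp
  qed
  moreover have "(\<Sum>i=1..M. ?E i j) \<ge> 1" if j: "j \<in> {1..x}" for j
  proof -
    obtain i where i: "i \<in> {1..M}" "?E i j = 1"
    proof (cases "B j = 1")
      case True
      then show ?thesis using that[of M] assms(1) j cover_matrix_last_row[OF assms(1)] by simp
    next
      case False
      then obtain i where "i \<in> {1..M-1}" "j \<in> R i" using R_cov j by blast
      moreover from this have "i \<in> {1..M}" by auto
      ultimately show ?thesis using that[of i] j by (simp add: cover_matrix_def)
    qed
    then have "?E i j \<le> (\<Sum>i=1..M. ?E i j)" by (intro member_le_sum) auto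
    then show ?thesis using i by simp
  qed
  ultimately show ?thesis
    using E01 assms(1) by (auto simp: Emats_def cover_matrix_def)
qed

lemma cover_matrix_row_supports:
  assumes "E \<in> Emats M x lam B"
  shows "cover_matrix M x B (row_supports M x E) = E"
proof (intro ext)
  fix i j
  have "E i j \<in> {0, 1}" "i \<notin> {1..M} \<or> j \<notin> {1..x} \<Longrightarrow> E i j = 0" "j \<in> {1..x} \<Longrightarrow> E M j = B j"
    using assms by (simp_all add: Emats_def)
  then show "cover_matrix M x B (row_supports M x E) i j = E i j"
    by (cases "i = M"; cases "i \<in> {1..M}"; cases "j \<in> {1..x}") (auto simp: cover_matrix_def row_supports_def)
qed

lemma row_supports_cover_matrix:
  assumes "R \<in> covers {1..x} F {1..M-1} lam"
  shows "row_supports M x (cover_matrix M x B R) = R"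
proof
  fix i
  have "R i \<subseteq> {1..x}" "i \<notin> {1..M-1} \<Longrightarrow> R i = {}"
    using assms by (auto simp: covers_def mem_families_iff)
  then show "row_supports M x (cover_matrix M x B R) i = R i"
    by (auto simp: cover_matrix_def row_supports_def)
qed

lemma card_Emats:
  assumes "1 \<le> M" "\<forall>j\<in>{1..x}. B j \<in> {0, 1}" "(\<Sum>j=1..x. B j) = lam M"
  shows "card (Emats M x lam B) = card (covers {1..x} {j\<in>{1..x}. B j = 1} {1..M-1} lam)"
proof (rule bij_betw_same_card[OF bij_betw_byWitness[where f = "row_supports M x" and f' = "cover_matrix M x B"]])
  show "row_supports M x ` Emats M x lam B \<subseteq> covers {1..x} {j\<in>{1..x}. B j = 1} {1..M-1} lam"
    using row_supports_mem_covers assms(1) by blast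
  show "cover_matrix M x B ` covers {1..x} {j\<in>{1..x}. B j = 1} {1..M-1} lam \<subseteq> Emats M x lam B"
    using cover_matrix_mem_Emats assms by blast
qed (simp_all add: cover_matrix_row_supports row_supports_cover_matrix)

section \<open>Images of fixed sets under uniform random permutations\<close>

lemma map_pmf_of_set_equal_fibres:
  assumes "finite A" "A \<noteq> {}" "f ` A = B"
    and fibres: "\<And>b b'. b \<in> B \<Longrightarrow> b' \<in> B \<Longrightarrow> card {a\<in>A. f a = b} \<le> card {a\<in>A. f a = b'}"
  shows "map_pmf f (pmf_of_set A) = pmf_of_set B"
proof (rule pmf_eqI)
  fix b
  have fin: "finite B" "B \<noteq> {}" using assms by auto
  have pmf_map_b: "pmf (map_pmf f (pmf_of_set A)) b = card {a\<in>A. f a = b} / card A"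
    using assms(1,2) by (simp add: pmf_map measure_pmf_of_set vimage_def Int_def)
  show "pmf (map_pmf f (pmf_of_set A)) b = pmf (pmf_of_set B) b"
  proof (cases "b \<in> B")
    case True
    have "(\<Sum>a\<in>A. 1::nat) = (\<Sum>b'\<in>B. \<Sum>a\<in>{a\<in>A. f a = b'}. 1)"
      by (rule sum.group[symmetric]) (use assms(1,3) fin in auto)
    then have "card A = (\<Sum>b'\<in>B. card {a\<in>A. f a = b'})" by simp
    also have "\<dots> = (\<Sum>b'\<in>B. card {a\<in>A. f a = b})"
      by (rule sum.cong) (use fibres True in \<open>auto intro: antisym\<close>)
    finally have "card A = card B * card {a\<in>A. f a = b}" by simp
    moreover have "card {a\<in>A. f a = b} > 0"
      using True assms(1,3) by (auto simp: card_gt_0_iff)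
    ultimately show ?thesis using True pmf_map_b fin by simp
  next
    case False
    then have "{a\<in>A. f a = b} = {}" using assms(3) by blast
    then have "pmf (map_pmf f (pmf_of_set A)) b = 0" using pmf_map_b by (metis card.empty of_nat_0 div_0)
    then show ?thesis using False fin by simp
  qed
qed

lemma map_pmf_image_permutes:
  assumes "finite U" "S \<subseteq> U"
  shows "map_pmf (\<lambda>p. p ` S) (pmf_of_set {p. p permutes U}) = pmf_of_set {T. T \<subseteq> U \<and> card T = card S}"
proof (rule map_pmf_of_set_equal_fibres)
  show "finite {p. p permutes U}" using assms(1) by (rule finite_permutations)
  show "{p. p permutes U} \<noteq> {}" using permutes_id by blast
  show "(\<lambda>p. p ` S) ` {p. p permutes U} = {T. T \<subseteq> U \<and> card T = card S}"
  proof
    show "(\<lambda>p. p ` S) ` {p. p permutes U} \<subseteq> {T. T \<subseteq> U \<and> card T = card S}"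
    proof clarify
      fix p assume p: "p permutes U"
      have "p ` S \<subseteq> p ` U" using assms(2) by (rule image_mono)
      then show "p ` S \<subseteq> U \<and> card (p ` S) = card S"
        using p by (simp add: permutes_image card_image permutes_inj_on)
    qed
    show "{T. T \<subseteq> U \<and> card T = card S} \<subseteq> (\<lambda>p. p ` S) ` {p. p permutes U}"
    proof
      fix T assume "T \<in> {T. T \<subseteq> U \<and> card T = card S}"
      then obtain g where "g permutes U" "g ` S = T" using ex_permutes_image_eq[OF assms(1,2), of T] by auto
      then show "T \<in> (\<lambda>p. p ` S) ` {p. p permutes U}" by blast
    qed
  qed
next
  fix T T' assume T: "T \<in> {T. T \<subseteq> U \<and> card T = card S}" and T': "T' \<in> {T. T \<subseteq> U \<and> card T = card S}"
  then obtain g where g: "g permutes U" "g ` T = T'" using ex_permutes_image_eq[OF assms(1), of T T'] by auto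
  show "card {p\<in>{p. p permutes U}. p ` S = T} \<le> card {p\<in>{p. p permutes U}. p ` S = T'}"
  proof (rule card_inj_on_le)
    show "inj_on ((\<circ>) g) {p\<in>{p. p permutes U}. p ` S = T}"
    proof (rule inj_onI)
      fix p q assume "g \<circ> p = g \<circ> q"
      then have "inv g \<circ> g \<circ> p = inv g \<circ> g \<circ> q" by (simp add: comp_assoc)
      then show "p = q" using permutes_inv_o(2)[OF g(1)] by simp
    qed
    show "(\<circ>) g ` {p\<in>{p. p permutes U}. p ` S = T} \<subseteq> {p\<in>{p. p permutes U}. p ` S = T'}"
      using g by (auto simp: permutes_compose image_comp)
    show "finite {p\<in>{p. p permutes U}. p ` S = T'}" using assms(1) by (simp add: finite_permutations)
  qed
qed

lemma Pi_pmf_map_dependent: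
  assumes "finite A"
  shows "Pi_pmf A d' (\<lambda>x. map_pmf (f x) (g x)) =
           map_pmf (\<lambda>h x. if x \<in> A then f x (h x) else d') (Pi_pmf A d g)"
proof -
  have "Pi_pmf A d' (\<lambda>x. map_pmf (f x) (g x)) = Pi_pmf A d' (\<lambda>x. g x \<bind> (\<lambda>y. return_pmf (f x y)))"
    by (simp add: map_pmf_def)
  also have "\<dots> = Pi_pmf A d g \<bind> (\<lambda>h. Pi_pmf A d' (\<lambda>x. return_pmf (f x (h x))))"
    using assms by (rule Pi_pmf_bind)
  also have "\<dots> = map_pmf (\<lambda>h x. if x \<in> A then f x (h x) else d') (Pi_pmf A d g)"
    using assms by (simp add: map_pmf_def)
  finally show ?thesis .
qed

lemma map_pmf_images_Pi_permutes:
  assumes "finite U" "finite I" "\<And>i. i \<in> I \<Longrightarrow> S i \<subseteq> U"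
  shows "map_pmf (\<lambda>\<sigma> i. if i \<in> I then \<sigma> i ` S i else {}) (Pi_pmf I d (\<lambda>_. pmf_of_set {p. p permutes U}))
           = pmf_of_set (families U I (\<lambda>i. card (S i)))"
proof -
  have "map_pmf (\<lambda>\<sigma> i. if i \<in> I then \<sigma> i ` S i else {}) (Pi_pmf I d (\<lambda>_. pmf_of_set {p. p permutes U}))
      = Pi_pmf I {} (\<lambda>i. map_pmf (\<lambda>p. p ` S i) (pmf_of_set {p. p permutes U}))"
    using assms(2) by (rule Pi_pmf_map_dependent[symmetric])
  also have "\<dots> = Pi_pmf I {} (\<lambda>i. pmf_of_set {T. T \<subseteq> U \<and> card T = card (S i)})"
    using assms by (intro Pi_pmf_cong) (simp_all add: map_pmf_image_permutes)
  also have "\<dots> = pmf_of_set (families U I (\<lambda>i. card (S i)))"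
    unfolding families_def using assms by (intro Pi_pmf_of_set) (auto simp: finite_subset)
  finally show ?thesis .
qed

section \<open>The probability of \<open>#C = x\<close>\<close>

lemma pmf_of_set_perm_tuples:
  "pmf_of_set (perm_tuples k M) = Pi_pmf {2..M} id (\<lambda>_. pmf_of_set {p. p permutes {1..k}})"
proof -
  have "perm_tuples k M = PiE_dflt {2..M} id (\<lambda>_. {p. p permutes {1..k}})"
    by (auto simp: perm_tuples_def PiE_dflt_def)
  moreover have "{p. p permutes {1..k}} \<noteq> {}" using permutes_id by blast
  ultimately show ?thesis by (simp add: Pi_pmf_of_set finite_permutations)
qed

lemma prob_numC_eq_card_families:
  assumes "1 \<le> M" and S: "\<forall>j\<in>{2..M}. S j \<subseteq> {1..k} \<and> card (S j) = lam j"
  shows "prob_numC k M S x =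
           card {T \<in> families {1..k} {2..M} lam. card (S 1 \<union> \<Union>(T ` {2..M})) = x}
           / card (families {1..k} {2..M} lam)"
proof -
  define \<Phi> where "\<Phi> \<sigma> = (\<lambda>i. if i \<in> {2..M} then \<sigma> i ` S i else {})" for \<sigma> :: "nat \<Rightarrow> nat \<Rightarrow> nat"
  have "{1..M} = insert 1 {2..M}" using assms(1) by auto
  then have numC: "numC \<sigma> M S = card (S 1 \<union> \<Union>(\<Phi> \<sigma> ` {2..M}))" for \<sigma>
    by (simp add: numC_def carried_def \<Phi>_def)
  have "families {1..k} {2..M} (\<lambda>i. card (S i)) = families {1..k} {2..M} lam"
    using S by (intro families_cong) auto
  then have distr: "map_pmf \<Phi> (pmf_of_set (perm_tuples k M)) = pmf_of_set (families {1..k} {2..M} lam)"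
    unfolding pmf_of_set_perm_tuples \<Phi>_def using S by (subst map_pmf_images_Pi_permutes) auto
  have "prob_numC k M S x =
      measure_pmf.prob (map_pmf \<Phi> (pmf_of_set (perm_tuples k M))) {T. card (S 1 \<union> \<Union>(T ` {2..M})) = x}"
    unfolding prob_numC_def measure_map_pmf numC by (simp add: vimage_def)
  also have "\<dots> =
      measure_pmf.prob (pmf_of_set (families {1..k} {2..M} lam)) {T. card (S 1 \<union> \<Union>(T ` {2..M})) = x}"
    unfolding distr ..
  also have "\<dots> = card {T \<in> families {1..k} {2..M} lam. card (S 1 \<union> \<Union>(T ` {2..M})) = x}
           / card (families {1..k} {2..M} lam)"
  proof (subst measure_pmf_of_set)
    have "(\<lambda>i. if i \<in> {2..M} then S i else {}) \<in> families {1..k} {2..M} lam"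
      using S by (simp add: mem_families_iff)
    then show "families {1..k} {2..M} lam \<noteq> {}" by blast
  qed (simp_all add: finite_families Int_def)
  finally show ?thesis .
qed

lemma card_families_union_card_choose_Emats:
  assumes "1 \<le> M" "S1 \<subseteq> {1..k}" "card S1 = lam 1" "lam M \<le> x" "x \<le> k"
    and "\<forall>j\<in>{1..x}. B j \<in> {0, 1}" "(\<Sum>j=1..x. B j) = lam M"
  shows "card {T \<in> families {1..k} {2..M} lam. card (S1 \<union> \<Union>(T ` {2..M})) = x} * (k choose lam 1) =
           (k choose lam M) * ((k - lam M) choose (x - lam M)) * card (Emats M x lam B)"
proof -
  let ?Bs = "{j\<in>{1..x}. B j = 1}"
  have "M \<notin> {1..M-1}" using assms(1) by auto
  have card_Bs: "card ?Bs = lam M" using sum_zero_one_eq_card[of "{1..x}" B] assms(6,7) by simp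
  have "card {T \<in> families {1..k} {2..M} lam. card (S1 \<union> \<Union>(T ` {2..M})) = x} * (k choose lam 1) =
      (k choose x) * card (covers {1..x} {} (insert 1 {2..M}) lam)"
    using card_families_union_card_mult_choose[of "{1..k}" "{2..M}" 1 S1 lam "{1..x}" x] assms(2,3,5)
    by simp
  also have "insert 1 {2..M} = insert M {1..M-1}" using assms(1) by auto
  also have "card (covers {1..x} {} (insert M {1..M-1}) lam) =
      (card {1..x} choose lam M) * card (covers {1..x} ?Bs {1..M-1} lam)"
    by (rule card_covers_insert) (use \<open>M \<notin> {1..M-1}\<close> card_Bs in auto)
  also have "card (covers {1..x} ?Bs {1..M-1} lam) = card (Emats M x lam B)"
    using card_Emats[of M x B lam] assms(1,6,7) by simp
  also have "card {1..x} = x" by simp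
  also have "(k choose x) * ((x choose lam M) * card (Emats M x lam B)) =
      (k choose lam M) * ((k - lam M) choose (x - lam M)) * card (Emats M x lam B)"
    using choose_mult[OF assms(4,5)] by simp
  finally show ?thesis .
qed

lemma ceiling_div_bounds:
  assumes "0 < k" "0 < n" "M = nat \<lceil>real n / real k\<rceil>"
  shows "1 \<le> M" "n \<le> M * k"
proof -
  have pos: "\<lceil>real n / real k\<rceil> > 0" using assms(1,2) by simp
  then show "1 \<le> M" using assms(3) by linarith
  have "real n / real k \<le> real M" using assms(3) pos le_of_int_ceiling by simp
  then have "real n \<le> real (M * k)" using assms(1) by (simp add: divide_le_eq)
  then show "n \<le> M * k" by (simp only: of_nat_le_iff)
qed

lemma prod_choose_first_last:
  fixes k M :: nat and lam :: "nat \<Rightarrow> nat"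
  assumes "1 \<le> M"
  shows "(k choose lam 1) * (\<Prod>j=2..M. k choose lam j) = (\<Prod>j=1..M-1. k choose lam j) * (k choose lam M)"
proof -
  obtain m where "M = Suc m" using assms by (cases M) auto
  then have "(\<Prod>j=1..M. k choose lam j) = (\<Prod>j=1..M-1. k choose lam j) * (k choose lam M)"
    by (simp add: prod.nat_ivl_Suc')
  moreover have "(\<Prod>j=1..M. k choose lam j) = (k choose lam 1) * (\<Prod>j=2..M. k choose lam j)"
    using assms prod.atLeast_Suc_atMost[of 1 M "\<lambda>j. k choose lam j"] by (simp add: numeral_2_eq_2)
  ultimately show ?thesis by simp
qed

theorem lemma4:
  fixes k n M r x :: nat and lam :: "nat \<Rightarrow> nat" and S :: "nat \<Rightarrow> nat set"
    and B :: "nat \<Rightarrow> nat"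
  assumes "2 \<le> k" and "k \<le> n"
    and "M = nat \<lceil>real n / real k\<rceil>" and "r = n - (M - 1) * k"
    and "\<forall>j\<in>{1..M}. lam j \<le> k" and "lam M \<le> r"
    and "\<forall>j\<in>{1..M}. S j \<subseteq> {1..(if j = M then r else k)} \<and> card (S j) = lam j"
    and "lam M \<le> x" and "x \<le> k"
    and "\<forall>j\<in>{1..x}. B j \<in> {0, 1}" and "(\<Sum>j=1..x. B j) = lam M"
  shows "prob_numC k M S x =
           real ((k - lam M) choose (x - lam M)) * real (card (Emats M x lam B))
           / (\<Prod>j=1..M-1. real (k choose lam j))"
proof -
  have M: "1 \<le> M" "n \<le> M * k" using ceiling_div_bounds assms(1-3) by auto
  then have "r \<le> k" using assms(4) by (cases M) auto
  then have "{1..(if j = M then r else k)} \<subseteq> {1..k}" for j by auto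
  then have S: "\<forall>j\<in>{1..M}. S j \<subseteq> {1..k} \<and> card (S j) = lam j" using assms(7) by blast
  let ?count = "card {T \<in> families {1..k} {2..M} lam. card (S 1 \<union> \<Union>(T ` {2..M})) = x}"
  let ?C = "(k - lam M) choose (x - lam M)" and ?E = "card (Emats M x lam B)"
  let ?P = "\<lambda>J. \<Prod>j\<in>J. real (k choose lam j)"
  have count: "real ?count * real (k choose lam 1) = real (k choose lam M) * (real ?C * real ?E)"
    using card_families_union_card_choose_Emats[of M "S 1" k lam x B] S M(1) assms(8-11)
    by (simp flip: of_nat_mult)
  have prods: "real (k choose lam 1) * ?P {2..M} = ?P {1..M-1} * real (k choose lam M)"
    using prod_choose_first_last[OF M(1), of k lam] by (simp flip: of_nat_mult of_nat_prod)
  have pos: "real (k choose lam 1) > 0" "real (k choose lam M) > 0" using assms(5) M(1) by auto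
  have "prob_numC k M S x = real ?count / ?P {2..M}"
    using prob_numC_eq_card_families[of M S k lam x] card_families[of "{1..k}" "{2..M}" lam] S M(1)
    by simp
  also have "\<dots> = real ?count * real (k choose lam 1) / (real (k choose lam 1) * ?P {2..M})"
    using pos(1) by simp
  also have "\<dots> = real ?C * real ?E / ?P {1..M-1}"
    unfolding count prods using pos(2) by simp
  finally show ?thesis .
qed

end
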